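(* Let $n > 2k+1$. On every instance, the output set of the algorithm DetMaxFind contains the uncorrupted maximum (and has exactly $2k+1$ elements).
   Context: Model: $n$ elements $x_1,\dots,x_n$, exactly $k$ corrupted (unknown to the algorithm); a tournament (comparison graph) says for each pair which is larger; restricted to uncorrupted elements it is acyclic, while comparisons involving corrupted elements are arbitrary. The uncorrupted maximum is the uncorrupted element larger than every other uncorrupted element. Algorithm DetMaxFind: start with $S=\emptyset$. For $i = 1,\dots,n$: compare $x_i$ with every element currently in $S$ (storing all results), set $S \leftarrow S \cup \{x_i\}$, and if $|S| > 2k+1$ (so $|S| = 2k+2$), choose some element $\bar x \in S$ that is smaller than at least $k+1$ other elements of $S$ (such an element exists by pigeonhole, and is found from the stored comparisons) and remove it from $S$. Output $S$. *)

theory Defs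
  imports Main
begin

text \<open>Elements are indexed 0..<n.  gt i j means: the comparison between x_i and x_j
  says that x_i is larger.  C is the set of corrupted indices.\<close>

definition is_tournament :: "nat \<Rightarrow> (nat \<Rightarrow> nat \<Rightarrow> bool) \<Rightarrow> bool" where
  "is_tournament n gt \<longleftrightarrow>
     (\<forall>i<n. \<forall>j<n. i \<noteq> j \<longrightarrow> (gt i j \<longleftrightarrow> \<not> gt j i))"

definition uncorrupted :: "nat \<Rightarrow> nat set \<Rightarrow> nat set" where
  "uncorrupted n C = {..<n} - C"

definition consistent_uncorrupted :: "nat \<Rightarrow> nat set \<Rightarrow> (nat \<Rightarrow> nat \<Rightarrow> bool) \<Rightarrow> bool" where
  "consistent_uncorrupted n C gt \<longleftrightarrow>
     acyclic {(i, j). i \<in> uncorrupted n C \<and> j \<in> uncorrupted n C \<and> gt i j}"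

definition is_uncorrupted_max :: "nat \<Rightarrow> nat set \<Rightarrow> (nat \<Rightarrow> nat \<Rightarrow> bool) \<Rightarrow> nat \<Rightarrow> bool" where
  "is_uncorrupted_max n C gt u \<longleftrightarrow>
     u \<in> uncorrupted n C \<and> (\<forall>v \<in> uncorrupted n C. v \<noteq> u \<longrightarrow> gt u v)"

text \<open>One iteration of DetMaxFind processing element i (all choices of the removed
  element are allowed).\<close>
definition detmax_step :: "(nat \<Rightarrow> nat \<Rightarrow> bool) \<Rightarrow> nat \<Rightarrow> nat \<Rightarrow> nat set \<Rightarrow> nat set \<Rightarrow> bool" where
  "detmax_step gt k i S S' \<longleftrightarrow>
     (let S1 = insert i S in
      if card S1 \<le> 2 * k + 1 then S' = S1
      else (\<exists>x \<in> S1. card {y \<in> S1. y \<noteq> x \<and> gt y x} \<ge> k + 1 \<and> S' = S1 - {x}))"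

inductive detmax_reach :: "(nat \<Rightarrow> nat \<Rightarrow> bool) \<Rightarrow> nat \<Rightarrow> nat \<Rightarrow> nat set \<Rightarrow> bool"
  for gt :: "nat \<Rightarrow> nat \<Rightarrow> bool" and k :: nat where
  init: "detmax_reach gt k 0 {}"
| step: "detmax_reach gt k i S \<Longrightarrow> detmax_step gt k i S S' \<Longrightarrow> detmax_reach gt k (Suc i) S'"

end

theory Submission
  imports Defs
begin

text \<open>The uncorrupted maximum u is beaten only by corrupted elements, so by at most k elements
  in total; an element is discarded only when at least k+1 elements of S beat it, hence u,
  once inserted, is never discarded. Discarding is always possible because in any tournament
  on 2k+2 elements the in-degrees sum to (2k+2)(2k+1)/2, so some in-degree is at least k+1.
  Each step inserts one element and discards one once |S| would exceed 2k+1, so the final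
  set has min n (2k+1) = 2k+1 elements.\<close>

definition tournament_on :: "'a set \<Rightarrow> ('a \<Rightarrow> 'a \<Rightarrow> bool) \<Rightarrow> bool" where
  "tournament_on A gt \<longleftrightarrow> (\<forall>x\<in>A. \<forall>y\<in>A. x \<noteq> y \<longrightarrow> (gt x y \<longleftrightarrow> \<not> gt y x))"

lemma tournament_onD:
  "tournament_on A gt \<Longrightarrow> x \<in> A \<Longrightarrow> y \<in> A \<Longrightarrow> x \<noteq> y \<Longrightarrow> gt x y \<longleftrightarrow> \<not> gt y x"
  unfolding tournament_on_def by blast

lemma is_tournament_imp_tournament_on:
  "is_tournament n gt \<Longrightarrow> A \<subseteq> {..<n} \<Longrightarrow> tournament_on A gt"
  unfolding is_tournament_def tournament_on_def by blast

lemma sum_card_filter_swap: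
  assumes "finite A"
  shows "(\<Sum>x\<in>A. card {y \<in> A. R x y}) = (\<Sum>y\<in>A. card {x \<in> A. R x y})"
proof -
  have "(\<Sum>x\<in>A. card {y \<in> A. R x y}) = (\<Sum>x\<in>A. \<Sum>y\<in>A. if R x y then 1 else 0)"
    using assms by (simp only: card_eq_sum sum.inter_filter)
  also have "\<dots> = (\<Sum>y\<in>A. \<Sum>x\<in>A. if R x y then 1 else 0)"
    by (rule sum.swap)
  also have "\<dots> = (\<Sum>y\<in>A. card {x \<in> A. R x y})"
    using assms by (simp only: card_eq_sum sum.inter_filter)
  finally show ?thesis .
qed

lemma tournament_indegree_sum:
  assumes "finite A" "tournament_on A gt"
  shows "2 * (\<Sum>x\<in>A. card {y \<in> A. y \<noteq> x \<and> gt y x}) = card A * (card A - 1)"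
proof -
  have "card {y \<in> A. y \<noteq> x \<and> gt y x} + card {y \<in> A. y \<noteq> x \<and> gt x y} = card A - 1"
    if "x \<in> A" for x
  proof -
    have "{y \<in> A. y \<noteq> x \<and> gt y x} \<union> {y \<in> A. y \<noteq> x \<and> gt x y} = A - {x}"
      using tournament_onD[OF assms(2) that] by blast
    moreover have "{y \<in> A. y \<noteq> x \<and> gt y x} \<inter> {y \<in> A. y \<noteq> x \<and> gt x y} = {}"
      using tournament_onD[OF assms(2) that] by blast
    ultimately show ?thesis
      using assms(1) that card_Un_disjoint[of "{y \<in> A. y \<noteq> x \<and> gt y x}" "{y \<in> A. y \<noteq> x \<and> gt x y}"]
      by simp
  qed
  then have "(\<Sum>x\<in>A. card {y \<in> A. y \<noteq> x \<and> gt y x}) + (\<Sum>x\<in>A. card {y \<in> A. y \<noteq> x \<and> gt x y})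
      = card A * (card A - 1)"
    by (simp add: sum.distrib[symmetric])
  moreover have "(\<Sum>x\<in>A. card {y \<in> A. y \<noteq> x \<and> gt x y}) = (\<Sum>x\<in>A. card {y \<in> A. y \<noteq> x \<and> gt y x})"
    using sum_card_filter_swap[OF assms(1), of "\<lambda>x y. y \<noteq> x \<and> gt x y"] by (simp add: eq_commute)
  ultimately show ?thesis
    by simp
qed

lemma tournament_ex_large_indegree:
  assumes "finite A" "A \<noteq> {}" "tournament_on A gt"
  shows "\<exists>x\<in>A. card A - 1 \<le> 2 * card {y \<in> A. y \<noteq> x \<and> gt y x}"
proof (rule ccontr)
  assume "\<not> ?thesis"
  then have "(\<Sum>x\<in>A. 2 * card {y \<in> A. y \<noteq> x \<and> gt y x}) < (\<Sum>x\<in>A. card A - 1)"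
    using assms(1,2) by (intro sum_strict_mono) auto
  then show False
    using tournament_indegree_sum[OF assms(1,3)] by (simp add: sum_distrib_left)
qed

lemma acyclic_tournament_has_max:
  assumes "finite A" "A \<noteq> {}" "tournament_on A gt"
    and "acyclic {(x, y). x \<in> A \<and> y \<in> A \<and> gt x y}"
  shows "\<exists>m\<in>A. \<forall>v\<in>A. v \<noteq> m \<longrightarrow> gt m v"
proof -
  let ?R = "{(x, y). x \<in> A \<and> y \<in> A \<and> gt x y}"
  have "finite ?R"
    by (rule finite_subset[of _ "A \<times> A"]) (use assms(1) in auto)
  then have "wf ?R"
    using assms(4) by (rule finite_acyclic_wf)
  then obtain m where "m \<in> A" and unbeaten: "\<And>y. (y, m) \<in> ?R \<Longrightarrow> y \<notin> A"
    using assms(2) by (rule wfE_min') blast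
  have "gt m v" if "v \<in> A" "v \<noteq> m" for v
    using unbeaten[of v] tournament_onD[OF assms(3) \<open>m \<in> A\<close> that(1)] that \<open>m \<in> A\<close> by auto
  then show ?thesis
    using \<open>m \<in> A\<close> by blast
qed

lemma uncorrupted_max_exists:
  assumes "C \<subseteq> {..<n}" "card C < n" "is_tournament n gt" "consistent_uncorrupted n C gt"
  shows "\<exists>u. is_uncorrupted_max n C gt u"
proof -
  have "card (uncorrupted n C) = n - card C"
    unfolding uncorrupted_def using assms(1) by (simp add: card_Diff_subset finite_subset)
  then have "uncorrupted n C \<noteq> {}"
    using assms(2) by auto
  moreover have "tournament_on (uncorrupted n C) gt"
    using assms(3) unfolding uncorrupted_def by (rule is_tournament_imp_tournament_on) blast
  ultimately show ?thesis
    using acyclic_tournament_has_max[of "uncorrupted n C" gt] assms(4)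
    unfolding is_uncorrupted_max_def consistent_uncorrupted_def uncorrupted_def by auto
qed

lemma uncorrupted_max_beaten_only_by_corrupted:
  assumes "is_uncorrupted_max n C gt u" "is_tournament n gt" "y < n" "y \<noteq> u" "gt y u"
  shows "y \<in> C"
proof (rule ccontr)
  assume "y \<notin> C"
  with assms(1,3,4) have "gt u y" "u < n"
    unfolding is_uncorrupted_max_def uncorrupted_def by auto
  with assms(2,3,4,5) show False
    unfolding is_tournament_def by blast
qed

lemma detmax_stepE:
  assumes "detmax_step gt k i S S'"
  obtains "card (insert i S) \<le> 2 * k + 1" "S' = insert i S"
  | x where "2 * k + 1 < card (insert i S)" "x \<in> insert i S"
      "k + 1 \<le> card {y \<in> insert i S. y \<noteq> x \<and> gt y x}" "S' = insert i S - {x}"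
  using assms unfolding detmax_step_def Let_def by (auto split: if_splits)

lemma detmax_reach_subset_card:
  assumes "detmax_reach gt k i S"
  shows "S \<subseteq> {..<i} \<and> card S = min i (2 * k + 1)"
  using assms
proof (induction rule: detmax_reach.induct)
  case init
  then show ?case by simp
next
  case (step i S S')
  then have sub: "S \<subseteq> {..<i}" and card: "card S = min i (2 * k + 1)"
    by auto
  then have "finite S" "i \<notin> S"
    using finite_subset by auto
  then have card_insert: "card (insert i S) = Suc (card S)"
    by simp
  have insert_sub: "insert i S \<subseteq> {..<Suc i}"
    using sub by auto
  from \<open>detmax_step gt k i S S'\<close> show ?case
  proof (cases rule: detmax_stepE)
    case 1
    then show ?thesis
      using insert_sub card card_insert by (auto simp: min_def split: if_splits)
  next
    case (2 x)
    then have "card S' = card S"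
      using card_insert \<open>finite S\<close> by simp
    moreover have "card S = 2 * k + 1" "2 * k + 1 \<le> i"
      using 2(1) card card_insert by (auto simp: min_def split: if_splits)
    ultimately show ?thesis
      using 2(4) insert_sub by auto
  qed
qed

lemma detmax_reach_keeps_weakly_beaten:
  assumes "detmax_reach gt k i S" "u < i" "card {y \<in> {..<i}. y \<noteq> u \<and> gt y u} \<le> k"
  shows "u \<in> S"
  using assms
proof (induction arbitrary: u rule: detmax_reach.induct)
  case init
  then show ?case by simp
next
  case (step i S S')
  let ?beats_u = "{y \<in> {..<Suc i}. y \<noteq> u \<and> gt y u}"
  have "card {y \<in> {..<i}. y \<noteq> u \<and> gt y u} \<le> card ?beats_u"
    by (rule card_mono) auto
  then have "u < i \<Longrightarrow> u \<in> S"
    using step.IH step.prems(2) by simp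
  then have u_in: "u \<in> insert i S"
    using step.prems(1) by (cases "u = i") auto
  from \<open>detmax_step gt k i S S'\<close> show ?case
  proof (cases rule: detmax_stepE)
    case 1
    then show ?thesis using u_in by simp
  next
    case (2 x)
    have "insert i S \<subseteq> {..<Suc i}"
      using detmax_reach_subset_card[OF step.hyps(1)] by auto
    then have "card {y \<in> insert i S. y \<noteq> u \<and> gt y u} \<le> card ?beats_u"
      by (intro card_mono) auto
    then have "x \<noteq> u"
      using 2(3) step.prems(2) by auto
    then show ?thesis
      using 2(4) u_in by simp
  qed
qed

lemma detmax_step_exists:
  assumes "detmax_reach gt k i S" "tournament_on (insert i S) gt"
  shows "\<exists>S'. detmax_step gt k i S S'"
proof (cases "card (insert i S) \<le> 2 * k + 1")
  case True
  then show ?thesis unfolding detmax_step_def by simp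
next
  case False
  have "S \<subseteq> {..<i}" "card S \<le> 2 * k + 1"
    using detmax_reach_subset_card[OF assms(1)] by auto
  then have fin: "finite (insert i S)" and card: "card (insert i S) = 2 * k + 2"
    using False by (auto simp: finite_subset card_insert_if)
  obtain x where "x \<in> insert i S" "k + 1 \<le> card {y \<in> insert i S. y \<noteq> x \<and> gt y x}"
    using tournament_ex_large_indegree[OF fin _ assms(2)] card by fastforce
  then show ?thesis
    using False unfolding detmax_step_def Let_def by auto
qed

lemma detmax_reach_exists:
  assumes "is_tournament n gt" "i \<le> n"
  shows "\<exists>S. detmax_reach gt k i S"
  using assms(2)
proof (induction i)
  case 0
  then show ?case using detmax_reach.init by blast
next
  case (Suc i)
  then obtain S where S: "detmax_reach gt k i S" by auto
  have "insert i S \<subseteq> {..<n}"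
    using detmax_reach_subset_card[OF S] Suc.prems by auto
  then have "tournament_on (insert i S) gt"
    by (rule is_tournament_imp_tournament_on[OF assms(1)])
  then show ?case
    using detmax_step_exists[OF S] S detmax_reach.step by blast
qed

theorem mainTheorem5:
  fixes n k :: nat and C :: "nat set" and gt :: "nat \<Rightarrow> nat \<Rightarrow> bool"
  assumes "n > 2 * k + 1"
    and "C \<subseteq> {..<n}" and "card C = k"
    and "is_tournament n gt"
    and "consistent_uncorrupted n C gt"
  shows "(\<exists>S. detmax_reach gt k n S) \<and>
         (\<forall>S. detmax_reach gt k n S \<longrightarrow>
              card S = 2 * k + 1 \<and> (\<exists>u \<in> S. is_uncorrupted_max n C gt u))"
proof -
  obtain u where u: "is_uncorrupted_max n C gt u"
    using uncorrupted_max_exists assms by fastforce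
  have "u < n"
    using u unfolding is_uncorrupted_max_def uncorrupted_def by simp
  have "{y \<in> {..<n}. y \<noteq> u \<and> gt y u} \<subseteq> C"
    using uncorrupted_max_beaten_only_by_corrupted[OF u assms(4)] by auto
  then have few_beat_u: "card {y \<in> {..<n}. y \<noteq> u \<and> gt y u} \<le> k"
    using assms(2,3) by (metis card_mono finite_lessThan finite_subset)
  have "card S = 2 * k + 1 \<and> u \<in> S" if "detmax_reach gt k n S" for S
    using detmax_reach_subset_card[OF that] assms(1)
      detmax_reach_keeps_weakly_beaten[OF that \<open>u < n\<close> few_beat_u] by simp
  then show ?thesis
    using detmax_reach_exists[OF assms(4) order_refl] u by blast
qed

end
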